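(* Let $V$ be a braided vector space of diagonal type over a field $F$ of characteristic zero with basis $x_1,\dots,x_n$ and braiding $C(x_i\otimes x_j)=p_{i,j}x_j\otimes x_i$, and let $\mathfrak B(V)$ be its Nichols algebra. Then $\mathfrak L(V)=\mathfrak L(V)_R$ if and only if $p_{i,i}^2=1$ for all $i$ and, for all $1\le i\ne j\le n$, $p_{i,j}p_{j,i}=1$ and $p_{i,j}^3=1$. In this case $\mathfrak L(V)=\mathfrak L(V)_R=V$.
   Context: $\mathfrak B(V)=T(V)/\bigoplus_{m\ge2}\ker S_m$ is $\mathbb Z^n$-graded with $\deg x_i=e_i$; for homogeneous $u,v$ with $\deg u=\sum a_ie_i$, $\deg v=\sum b_je_j$ put $p_{u,v}=\prod p_{i,j}^{a_ib_j}$. $\mathfrak L(V)$ is the subspace of $\mathfrak B(V)$ generated by $V$ under the braided bracket $[u,v]=uv-p_{u,v}vu$ (for homogeneous $u,v$, extended bilinearly), i.e. the smallest subspace containing $V$ and closed under this bracket (the Nichols braided Lie algebra). $\mathfrak L(V)_R$ is the Lie subalgebra of $\mathfrak B(V)$ generated by $V$ under $[u,v]_R=p_{u,v}uv-p_{v,u}vu$. *)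

theory Defs
  imports "HOL-Combinatorics.Permutations"
begin

text \<open>
Model of the tensor algebra T(V) of the braided vector space V of diagonal type with
basis x_0,...,x_{n-1} (paper: x_1..x_n) and braiding c(x_i \<otimes> x_j) = p i j x_j \<otimes> x_i.
An element of T(V) is a finitely supported function from words (nat lists with letters < n)
to the field; the word [i1,...,im] stands for x_i1 \<otimes> ... \<otimes> x_im.
\<close>

definition tensor :: "nat \<Rightarrow> (nat list \<Rightarrow> 'a::zero) \<Rightarrow> bool" where
  "tensor n u \<longleftrightarrow> finite {w. u w \<noteq> 0} \<and> (\<forall>w. u w \<noteq> 0 \<longrightarrow> set w \<subseteq> {..<n})"

definition gen_x :: "nat \<Rightarrow> (nat list \<Rightarrow> 'a::{zero,one})" where
  "gen_x i = (\<lambda>w. if w = [i] then 1 else 0)"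

definition vspace :: "nat \<Rightarrow> (nat list \<Rightarrow> 'a::zero) set" where
  "vspace n = {u. tensor n u \<and> (\<forall>w. u w \<noteq> 0 \<longrightarrow> length w = 1)}"

text \<open>bicharacter p_{u,v} on words (multidegrees): product of p over all letter pairs\<close>
definition chi :: "(nat \<Rightarrow> nat \<Rightarrow> 'a::comm_ring_1) \<Rightarrow> nat list \<Rightarrow> nat list \<Rightarrow> 'a" where
  "chi p a b = (\<Prod>i<length a. \<Prod>j<length b. p (a ! i) (b ! j))"

definition tmult :: "(nat list \<Rightarrow> 'a::comm_ring_1) \<Rightarrow> (nat list \<Rightarrow> 'a) \<Rightarrow> nat list \<Rightarrow> 'a" where
  "tmult u v = (\<lambda>w. \<Sum>k\<le>length w. u (take k w) * v (drop k w))"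

text \<open>braided bracket [u,v] = uv - p_{u,v} vu on homogeneous elements (words), extended
bilinearly: the coefficient of the word w collects all splittings w = a@b
(contribution u_a v_b of ab) and w = b@a (contribution -p_{a,b} u_a v_b of ba).\<close>
definition bbr :: "(nat \<Rightarrow> nat \<Rightarrow> 'a::comm_ring_1) \<Rightarrow> (nat list \<Rightarrow> 'a) \<Rightarrow> (nat list \<Rightarrow> 'a) \<Rightarrow> nat list \<Rightarrow> 'a" where
  "bbr p u v = (\<lambda>w. \<Sum>k\<le>length w.
      u (take k w) * v (drop k w) - chi p (drop k w) (take k w) * u (drop k w) * v (take k w))"

text \<open>bracket [u,v]_R = p_{u,v} uv - p_{v,u} vu, extended bilinearly\<close>
definition rbr :: "(nat \<Rightarrow> nat \<Rightarrow> 'a::comm_ring_1) \<Rightarrow> (nat list \<Rightarrow> 'a) \<Rightarrow> (nat list \<Rightarrow> 'a) \<Rightarrow> nat list \<Rightarrow> 'a" where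
  "rbr p u v = (\<lambda>w. \<Sum>k\<le>length w.
      chi p (take k w) (drop k w) * u (take k w) * v (drop k w)
      - chi p (take k w) (drop k w) * u (drop k w) * v (take k w))"

text \<open>Braid group action (Matsumoto lift) of a permutation s of {0..<m} on a word v of
length m: T_s(v) = (\<Prod> over inversions a<b, s a > s b of p (v!a) (v!b)) * w,
where the letter at position a moves to position s a, i.e. v = permute_word s w.\<close>
definition permute_word :: "(nat \<Rightarrow> nat) \<Rightarrow> nat list \<Rightarrow> nat list" where
  "permute_word s w = map (\<lambda>a. w ! s a) [0..<length w]"

definition braid_coef :: "(nat \<Rightarrow> nat \<Rightarrow> 'a::comm_ring_1) \<Rightarrow> nat \<Rightarrow> (nat \<Rightarrow> nat) \<Rightarrow> nat list \<Rightarrow> 'a" where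
  "braid_coef p m s v = (\<Prod>(a,b)\<in>{(a,b). a < b \<and> b < m \<and> s b < s a}. p (v ! a) (v ! b))"

definition symmetrizer :: "(nat \<Rightarrow> nat \<Rightarrow> 'a::comm_ring_1) \<Rightarrow> nat \<Rightarrow> (nat list \<Rightarrow> 'a) \<Rightarrow> nat list \<Rightarrow> 'a" where
  "symmetrizer p m u = (\<lambda>w. \<Sum>s\<in>{s. s permutes {..<m}}.
      braid_coef p m s (permute_word s w) * u (permute_word s w))"

definition hcomp :: "nat \<Rightarrow> (nat list \<Rightarrow> 'a::zero) \<Rightarrow> nat list \<Rightarrow> 'a" where
  "hcomp m u = (\<lambda>w. if length w = m then u w else 0)"

definition nichols_ideal :: "(nat \<Rightarrow> nat \<Rightarrow> 'a::comm_ring_1) \<Rightarrow> nat \<Rightarrow> (nat list \<Rightarrow> 'a) set" where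
  "nichols_ideal p n = {u. tensor n u \<and> (\<forall>m<2. hcomp m u = (\<lambda>_. 0))
      \<and> (\<forall>m\<ge>2. symmetrizer p m (hcomp m u) = (\<lambda>_. 0))}"

text \<open>image in B(V) = T(V)/I of a set S of tensors, represented as S + I\<close>
definition nichols_image :: "(nat \<Rightarrow> nat \<Rightarrow> 'a::comm_ring_1) \<Rightarrow> nat \<Rightarrow> (nat list \<Rightarrow> 'a) set \<Rightarrow> (nat list \<Rightarrow> 'a) set" where
  "nichols_image p n S = {v. \<exists>u\<in>S. (\<lambda>w. u w - v w) \<in> nichols_ideal p n}"

inductive_set generated :: "((nat list \<Rightarrow> 'a::comm_ring_1) \<Rightarrow> (nat list \<Rightarrow> 'a) \<Rightarrow> nat list \<Rightarrow> 'a)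
    \<Rightarrow> nat \<Rightarrow> (nat list \<Rightarrow> 'a) set" for br n where
  gen_basis: "i < n \<Longrightarrow> gen_x i \<in> generated br n"
| gen_zero: "(\<lambda>_. 0) \<in> generated br n"
| gen_add: "u \<in> generated br n \<Longrightarrow> v \<in> generated br n \<Longrightarrow> (\<lambda>w. u w + v w) \<in> generated br n"
| gen_smult: "u \<in> generated br n \<Longrightarrow> (\<lambda>w. c * u w) \<in> generated br n"
| gen_br: "u \<in> generated br n \<Longrightarrow> v \<in> generated br n \<Longrightarrow> br u v \<in> generated br n"

definition nichols_L :: "(nat \<Rightarrow> nat \<Rightarrow> 'a::comm_ring_1) \<Rightarrow> nat \<Rightarrow> (nat list \<Rightarrow> 'a) set" where
  "nichols_L p n = nichols_image p n (generated (bbr p) n)"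

definition nichols_LR :: "(nat \<Rightarrow> nat \<Rightarrow> 'a::comm_ring_1) \<Rightarrow> nat \<Rightarrow> (nat list \<Rightarrow> 'a) set" where
  "nichols_LR p n = nichols_image p n (generated (rbr p) n)"

definition nichols_V :: "(nat \<Rightarrow> nat \<Rightarrow> 'a::comm_ring_1) \<Rightarrow> nat \<Rightarrow> (nat list \<Rightarrow> 'a) set" where
  "nichols_V p n = nichols_image p n (vspace n)"

end

theory Submission
  imports Defs
begin

text \<open>
  Let \<open>K\<close> be the span of all tensors that are killed by \<open>1 + c\<^sub>k\<close> for the braiding \<open>c\<^sub>k\<close> of some
  two adjacent tensor factors. The quantum symmetrizer factors through \<open>1 + c\<^sub>k\<close>, so \<open>K\<close> lies in
  the Nichols ideal, and \<open>K\<close> is stable under multiplication on either side, also when the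
  product is twisted by a weight depending only on the multidegrees of the factors; both
  brackets are differences of such twisted products.
  If \<open>p\<^sub>i\<^sub>i\<^sup>2 = 1\<close>, \<open>p\<^sub>i\<^sub>j p\<^sub>j\<^sub>i = 1\<close> and \<open>p\<^sub>i\<^sub>j\<^sup>3 = 1\<close>, the bracket of two elements of \<open>V\<close> lies in \<open>K\<close>;
  hence, by induction, every element of the generated subspace is congruent modulo \<open>K\<close> to its
  degree one part, and \<open>L(V) = L(V)\<^sub>R = V\<close>.

  Conversely, in degree two the Nichols ideal is \<open>ker (1 + c)\<close>: \<open>d\<^sub>a\<^sub>b + p\<^sub>b\<^sub>a d\<^sub>b\<^sub>a = 0\<close>.
  Every element of \<open>L(V)\<^sub>R\<close> satisfies \<open>p\<^sub>b\<^sub>a u\<^sub>a\<^sub>b + p\<^sub>a\<^sub>b u\<^sub>b\<^sub>a = 0\<close> and, when \<open>p\<^sub>i\<^sub>j p\<^sub>j\<^sub>i = 1\<close>, every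
  element of \<open>L(V)\<close> satisfies \<open>u\<^sub>j\<^sub>i + p\<^sub>i\<^sub>j u\<^sub>i\<^sub>j = 0\<close>. Confronting \<open>[x\<^sub>i, x\<^sub>i]\<close>, \<open>[x\<^sub>i, x\<^sub>j]\<close> and
  \<open>[x\<^sub>i, x\<^sub>j]\<^sub>R\<close> with these relations modulo the ideal yields the three conditions.
\<close>

lemma tensor_zero: "tensor n (\<lambda>_. 0)"
  by (simp add: tensor_def)

lemma tensor_add:
  fixes f g :: "nat list \<Rightarrow> 'a::monoid_add"
  assumes "tensor n f" "tensor n g"
  shows "tensor n (\<lambda>w. f w + g w)"
proof -
  have "{w. f w + g w \<noteq> 0} \<subseteq> {w. f w \<noteq> 0} \<union> {w. g w \<noteq> 0}" by auto
  with assms show ?thesis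
    unfolding tensor_def by (metis (mono_tags) Un_iff add_0 finite_Un finite_subset mem_Collect_eq)
qed

lemma tensor_smult:
  fixes f :: "nat list \<Rightarrow> 'a::mult_zero"
  assumes "tensor n f"
  shows "tensor n (\<lambda>w. a * f w)"
proof -
  have "{w. a * f w \<noteq> 0} \<subseteq> {w. f w \<noteq> 0}" by auto
  with assms show ?thesis
    unfolding tensor_def by (metis (mono_tags) finite_subset mult_zero_right)
qed

lemma tensor_diff:
  fixes f g :: "nat list \<Rightarrow> 'a::group_add"
  assumes "tensor n f" "tensor n g"
  shows "tensor n (\<lambda>w. f w - g w)"
  using tensor_add[OF assms(1), of "\<lambda>w. - g w"] assms(2)
  by (simp add: tensor_def)

lemma tensor_hcomp: "tensor n f \<Longrightarrow> tensor n (hcomp m f)"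
  unfolding tensor_def hcomp_def by (auto intro: finite_subset[of _ "{w. f w \<noteq> 0}"])

lemma tensor_gen_x: "i < n \<Longrightarrow> tensor n (gen_x i)"
  by (simp add: tensor_def gen_x_def)

lemma tensor_support_bounded:
  assumes "tensor n v"
  obtains N where "\<And>w. v w \<noteq> 0 \<Longrightarrow> length w \<le> N"
proof -
  have "finite (length ` {w. v w \<noteq> 0})" using assms by (simp add: tensor_def)
  then show ?thesis using that by (meson finite_nat_set_iff_bounded_le image_eqI mem_Collect_eq)
qed

lemma sum_hcomp_eq:
  assumes "\<And>w. v w \<noteq> 0 \<Longrightarrow> length w \<le> N"
  shows "(\<lambda>w. \<Sum>j\<le>N. hcomp j v w) = v"
proof
  fix w
  show "(\<Sum>j\<le>N. hcomp j v w) = v w"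
    using assms[of w] by (cases "length w \<le> N") (auto simp: hcomp_def)
qed

lemma hcomp_add:
  fixes f g :: "nat list \<Rightarrow> 'a::monoid_add"
  shows "hcomp m (\<lambda>w. f w + g w) = (\<lambda>w. hcomp m f w + hcomp m g w)"
  by (simp add: hcomp_def fun_eq_iff)

lemma hcomp_smult:
  fixes f :: "nat list \<Rightarrow> 'a::mult_zero"
  shows "hcomp m (\<lambda>w. a * f w) = (\<lambda>w. a * hcomp m f w)"
  by (simp add: hcomp_def fun_eq_iff)

lemma hcomp_diff:
  fixes f g :: "nat list \<Rightarrow> 'a::group_add"
  shows "hcomp m (\<lambda>w. f w - g w) = (\<lambda>w. hcomp m f w - hcomp m g w)"
  by (simp add: hcomp_def fun_eq_iff)

lemma hcomp_zero: "hcomp m (\<lambda>_. 0) = (\<lambda>_. 0)"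
  by (simp add: hcomp_def fun_eq_iff)

lemma symmetrizer_add:
  "symmetrizer p m (\<lambda>w. f w + g w) = (\<lambda>w. symmetrizer p m f w + symmetrizer p m g w)"
  by (simp add: symmetrizer_def fun_eq_iff algebra_simps sum.distrib)

lemma symmetrizer_smult: "symmetrizer p m (\<lambda>w. a * f w) = (\<lambda>w. a * symmetrizer p m f w)"
  by (simp add: symmetrizer_def fun_eq_iff algebra_simps sum_distrib_left)

lemma symmetrizer_diff:
  "symmetrizer p m (\<lambda>w. f w - g w) = (\<lambda>w. symmetrizer p m f w - symmetrizer p m g w)"
  by (simp add: symmetrizer_def fun_eq_iff algebra_simps sum_subtractf)

lemma symmetrizer_zero: "symmetrizer p m (\<lambda>_. 0) = (\<lambda>_. 0)"
  by (simp add: symmetrizer_def fun_eq_iff)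

lemma nichols_ideal_zero: "(\<lambda>_. 0) \<in> nichols_ideal p n"
  by (simp add: nichols_ideal_def tensor_zero hcomp_zero symmetrizer_zero)

lemma nichols_ideal_diff:
  "f \<in> nichols_ideal p n \<Longrightarrow> g \<in> nichols_ideal p n \<Longrightarrow> (\<lambda>w. f w - g w) \<in> nichols_ideal p n"
  by (simp add: nichols_ideal_def tensor_diff hcomp_diff symmetrizer_diff)

lemma gen_x_Nil: "gen_x i [] = 0"
  by (simp add: gen_x_def)

lemma gen_x_letter: "gen_x i [a] = (if a = i then 1 else 0)"
  by (simp add: gen_x_def)

lemma vspace_length: "u \<in> vspace n \<Longrightarrow> length w \<noteq> 1 \<Longrightarrow> u w = 0"
  by (auto simp: vspace_def)

lemma vspace_Nil: "u \<in> vspace n \<Longrightarrow> u [] = 0"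
  by (simp add: vspace_length)

lemma vspace_letter: "u \<in> vspace n \<Longrightarrow> \<not> a < n \<Longrightarrow> u [a] = 0"
  by (auto simp: vspace_def tensor_def)

lemma hcomp_1_in_vspace: "tensor n u \<Longrightarrow> hcomp 1 u \<in> vspace n"
  by (simp add: vspace_def tensor_hcomp) (simp add: hcomp_def)

lemma vspace_eq_sum_gen_x:
  fixes u :: "nat list \<Rightarrow> 'a::comm_ring_1"
  assumes u: "u \<in> vspace n"
  shows "u = (\<lambda>w. \<Sum>i<n. u [i] * gen_x i w)"
proof
  fix w
  show "u w = (\<Sum>i<n. u [i] * gen_x i w)"
  proof (cases "\<exists>i<n. w = [i]")
    case True
    then obtain i where i: "i < n" "w = [i]" by blast
    then have "(\<Sum>j<n. u [j] * gen_x j w) = (\<Sum>j<n. if j = i then u [i] else 0)"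
      by (intro sum.cong) (auto simp: gen_x_def)
    with i show ?thesis by simp
  next
    case False
    have "u w = 0"
    proof (rule ccontr)
      assume "u w \<noteq> 0"
      with u have "length w = 1" "set w \<subseteq> {..<n}" by (auto simp: vspace_def tensor_def)
      with False show False by (cases w) auto
    qed
    moreover have "(\<Sum>i<n. u [i] * gen_x i w) = 0"
      using False by (intro sum.neutral) (auto simp: gen_x_def)
    ultimately show ?thesis by simp
  qed
qed

abbreviation adj_transpose :: "nat \<Rightarrow> nat \<Rightarrow> nat" where
  "adj_transpose k \<equiv> Transposition.transpose k (Suc k)"

definition swap_at :: "nat \<Rightarrow> 'b list \<Rightarrow> 'b list" where
  "swap_at k w = w[k := w ! Suc k, Suc k := w ! k]"

lemma length_swap_at [simp]: "length (swap_at k w) = length w"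
  by (simp add: swap_at_def)

lemma nth_swap_at:
  "Suc k < length w \<Longrightarrow> i < length w \<Longrightarrow> swap_at k w ! i = w ! adj_transpose k i"
  by (auto simp: swap_at_def nth_list_update transpose_def)

lemma take_swap_at_high: "Suc (Suc k) \<le> j \<Longrightarrow> take j (swap_at k w) = swap_at k (take j w)"
  by (simp add: swap_at_def take_update_swap)

lemma drop_swap_at_high: "Suc (Suc k) \<le> j \<Longrightarrow> drop j (swap_at k w) = drop j w"
  by (simp add: swap_at_def)

lemma take_swap_at_low: "j \<le> k \<Longrightarrow> take j (swap_at k w) = take j w"
  by (simp add: swap_at_def)

lemma drop_swap_at_low:
  "j \<le> k \<Longrightarrow> Suc k < length w \<Longrightarrow> drop j (swap_at k w) = swap_at (k - j) (drop j w)"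
  by (simp add: swap_at_def drop_update_swap Suc_diff_le)

lemma adj_transpose_permutes: "Suc k < m \<Longrightarrow> adj_transpose k permutes {..<m}"
  by (intro permutes_swap_id) auto

lemma adj_transpose_mono: "a < b \<Longrightarrow> (a, b) \<noteq> (k, Suc k) \<Longrightarrow> adj_transpose k a < adj_transpose k b"
  by (auto simp: transpose_def)

lemma adj_transpose_less: "Suc k < m \<Longrightarrow> a < m \<Longrightarrow> adj_transpose k a < m"
  by (auto simp: transpose_def)

lemma permute_word_eq_permute_list: "permute_word = permute_list"
  by (simp add: fun_eq_iff permute_word_def permute_list_def)

lemma permute_list_comp_adj_transpose:
  assumes "Suc k < length w"
  shows "permute_list (s \<circ> adj_transpose k) w = swap_at k (permute_list s w)"
proof (rule nth_equalityI)
  fix i assume "i < length (permute_list (s \<circ> adj_transpose k) w)"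
  with assms show "permute_list (s \<circ> adj_transpose k) w ! i = swap_at k (permute_list s w) ! i"
    by (simp add: permute_list_compose adj_transpose_permutes permute_list_nth nth_swap_at)
qed simp

lemma prod_nth_swap_at:
  assumes "Suc k < length a"
  shows "(\<Prod>i<length a. h (swap_at k a ! i)) = (\<Prod>i<length a. h (a ! i))"
proof -
  have "(\<Prod>i<length a. h (a ! i)) = (\<Prod>i<length a. ((\<lambda>i. h (a ! i)) \<circ> adj_transpose k) i)"
    using assms by (intro prod.permute adj_transpose_permutes)
  also have "\<dots> = (\<Prod>i<length a. h (swap_at k a ! i))"
    using assms by (intro prod.cong) (auto simp: nth_swap_at)
  finally show ?thesis by simp
qed

lemma inversions_comp_adj_transpose:
  fixes s :: "nat \<Rightarrow> nat"
  assumes km: "Suc k < m" and sk: "s k < s (Suc k)"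
  shows "{(a, b). a < b \<and> b < m \<and> (s \<circ> adj_transpose k) b < (s \<circ> adj_transpose k) a}
       = insert (k, Suc k)
           (map_prod (adj_transpose k) (adj_transpose k) ` {(a, b). a < b \<and> b < m \<and> s b < s a})"
    (is "?J = insert _ (?\<sigma> ` ?I)")
proof (intro equalityI subsetI)
  fix x assume "x \<in> ?J"
  then obtain a b where x: "x = (a, b)" "a < b" "b < m" "s (adj_transpose k b) < s (adj_transpose k a)"
    by auto
  show "x \<in> insert (k, Suc k) (?\<sigma> ` ?I)"
  proof (cases "x = (k, Suc k)")
    case False
    with x have "adj_transpose k a < adj_transpose k b" by (simp add: adj_transpose_mono)
    moreover have "adj_transpose k b < m" using x km by (simp add: adj_transpose_less)
    ultimately have "(adj_transpose k a, adj_transpose k b) \<in> ?I" using x by simp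
    then have "?\<sigma> (adj_transpose k a, adj_transpose k b) \<in> ?\<sigma> ` ?I" by blast
    then show ?thesis using x by simp
  qed simp
next
  fix x assume "x \<in> insert (k, Suc k) (?\<sigma> ` ?I)"
  then consider "x = (k, Suc k)" | a b where "x = ?\<sigma> (a, b)" "a < b" "b < m" "s b < s a"
    by auto
  then show "x \<in> ?J"
  proof cases
    case 2
    then have "(a, b) \<noteq> (k, Suc k)" using sk by auto
    with 2 have "adj_transpose k a < adj_transpose k b" by (simp add: adj_transpose_mono)
    moreover have "adj_transpose k b < m" using 2 km by (simp add: adj_transpose_less)
    ultimately show ?thesis using 2 by simp
  qed (simp add: km sk)
qed

lemma braid_coef_comp_adj_transpose:
  assumes km: "Suc k < m" and sk: "s k < s (Suc k)" and lv: "length v = m"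
  shows "braid_coef p m (s \<circ> adj_transpose k) (swap_at k v)
       = p (v ! Suc k) (v ! k) * braid_coef p m s v"
proof -
  let ?I = "{(a, b). a < b \<and> b < m \<and> s b < s a}"
  let ?\<sigma> = "map_prod (adj_transpose k) (adj_transpose k)"
  let ?f = "\<lambda>(a, b). p (swap_at k v ! a) (swap_at k v ! b)"
  have fin: "finite ?I" by (rule finite_subset[of _ "{..<m} \<times> {..<m}"]) auto
  have new: "(k, Suc k) \<notin> ?\<sigma> ` ?I"
  proof
    assume "(k, Suc k) \<in> ?\<sigma> ` ?I"
    then obtain a b where "(a, b) \<in> ?I" "adj_transpose k a = k" "adj_transpose k b = Suc k" by auto
    then have "a = Suc k" "b = k"
      by (metis transpose_involutory transpose_apply_first transpose_apply_second)+
    with \<open>(a, b) \<in> ?I\<close> show False by simp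
  qed
  have inj: "inj_on ?\<sigma> ?I" by (auto simp: inj_on_def dest: transpose_eq_imp_eq)
  have "braid_coef p m (s \<circ> adj_transpose k) (swap_at k v) = ?f (k, Suc k) * prod ?f (?\<sigma> ` ?I)"
    unfolding braid_coef_def inversions_comp_adj_transpose[OF km sk]
    using fin new by simp
  also have "prod ?f (?\<sigma> ` ?I) = prod (?f \<circ> ?\<sigma>) ?I" using inj by (rule prod.reindex)
  also have "\<dots> = (\<Prod>(a, b)\<in>?I. p (v ! a) (v ! b))"
  proof (rule prod.cong)
    fix x assume "x \<in> ?I"
    then obtain a b where "x = (a, b)" "a < m" "b < m" by auto
    with km lv show "(?f \<circ> ?\<sigma>) x = (\<lambda>(a, b). p (v ! a) (v ! b)) x"
      by (simp add: nth_swap_at adj_transpose_less)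
  qed simp
  finally show ?thesis
    using km lv by (simp add: braid_coef_def nth_swap_at)
qed

lemma sum_permutes_pair_adj_transpose:
  assumes km: "Suc k < m"
  shows "(\<Sum>s | s permutes {..<m}. F s)
       = (\<Sum>s | s permutes {..<m} \<and> s k < s (Suc k). F s + F (s \<circ> adj_transpose k))"
proof -
  define A where "A = {s. s permutes {..<m} \<and> s k < s (Suc k)}"
  define B where "B = {s. s permutes {..<m} \<and> s (Suc k) < s k}"
  have "s k \<noteq> s (Suc k)" if "s permutes {..<m}" for s
    using permutes_inj[OF that] by (metis injD n_not_Suc_n)
  then have split: "{s. s permutes {..<m}} = A \<union> B"
    unfolding A_def B_def by (auto simp: linorder_neq_iff)
  have fin: "finite {s. s permutes {..<m}}" by (simp add: finite_permutations)
  have tp: "adj_transpose k permutes {..<m}" using km by (rule adj_transpose_permutes)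
  have "sum F B = (\<Sum>s\<in>A. F (s \<circ> adj_transpose k))"
    by (rule sum.reindex_bij_witness[of _ "\<lambda>s. s \<circ> adj_transpose k" "\<lambda>s. s \<circ> adj_transpose k"])
      (use tp in \<open>auto simp: A_def B_def comp_assoc permutes_compose\<close>)
  moreover have "A \<inter> B = {}" by (auto simp: A_def B_def)
  ultimately show ?thesis
    using fin by (simp add: split sum.union_disjoint sum.distrib A_def[symmetric])
qed

section \<open>Braided antisymmetric tensors lie in the Nichols ideal\<close>

text \<open>Read as the tensor \<open>\<Sum>\<^sub>w f w \<cdot> w\<close>, \<open>f\<close> satisfies \<open>(1 + c\<^sub>k) f = 0\<close>, where \<open>c\<^sub>k\<close> is the braiding
  of the tensor factors \<open>k\<close> and \<open>k + 1\<close>.\<close>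
definition antisym_at :: "(nat \<Rightarrow> nat \<Rightarrow> 'a::comm_ring_1) \<Rightarrow> nat \<Rightarrow> (nat list \<Rightarrow> 'a) \<Rightarrow> bool" where
  "antisym_at p k f \<longleftrightarrow> (\<forall>w. length w \<le> Suc k \<longrightarrow> f w = 0) \<and>
     (\<forall>w. Suc k < length w \<longrightarrow> f w + p (w ! Suc k) (w ! k) * f (swap_at k w) = 0)"

inductive_set antisym_span :: "(nat \<Rightarrow> nat \<Rightarrow> 'a::comm_ring_1) \<Rightarrow> (nat list \<Rightarrow> 'a) set"
  for p
where
  antisym_span_zero: "(\<lambda>_. 0) \<in> antisym_span p"
| antisym_span_add:
    "f \<in> antisym_span p \<Longrightarrow> g \<in> antisym_span p \<Longrightarrow> (\<lambda>w. f w + g w) \<in> antisym_span p"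
| antisym_span_smult: "f \<in> antisym_span p \<Longrightarrow> (\<lambda>w. a * f w) \<in> antisym_span p"
| antisym_span_antisym_at: "antisym_at p k f \<Longrightarrow> f \<in> antisym_span p"

lemma antisym_at_short: "antisym_at p k f \<Longrightarrow> length w \<le> Suc k \<Longrightarrow> f w = 0"
  by (simp add: antisym_at_def)

lemma antisym_atD:
  "antisym_at p k f \<Longrightarrow> Suc k < length w \<Longrightarrow> f w + p (w ! Suc k) (w ! k) * f (swap_at k w) = 0"
  by (simp add: antisym_at_def)

lemma antisym_span_diff:
  assumes "f \<in> antisym_span p" "g \<in> antisym_span p"
  shows "(\<lambda>w. f w - g w) \<in> antisym_span p"
  using antisym_span_add[OF assms(1) antisym_span_smult[OF assms(2), of "- 1"]] by simp

lemma antisym_span_sum: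
  "finite A \<Longrightarrow> (\<And>j. j \<in> A \<Longrightarrow> f j \<in> antisym_span p) \<Longrightarrow> (\<lambda>w. \<Sum>j\<in>A. f j w) \<in> antisym_span p"
proof (induction A rule: finite_induct)
  case (insert j A)
  then have "(\<lambda>w. f j w + (\<Sum>j\<in>A. f j w)) \<in> antisym_span p" by (intro antisym_span_add) auto
  with insert show ?case by simp
qed (simp add: antisym_span_zero)

lemma antisym_span_short: "f \<in> antisym_span p \<Longrightarrow> length w \<le> 1 \<Longrightarrow> f w = 0"
  by (induction f rule: antisym_span.induct) (auto simp: antisym_at_def)

lemma symmetrizer_antisym_at:
  assumes f: "antisym_at p k f"
  shows "symmetrizer p m (hcomp m f) = (\<lambda>_. 0)"
proof (cases "Suc k < m")
  case False
  then have "hcomp m f = (\<lambda>_. 0)" using f by (auto simp: hcomp_def antisym_at_def fun_eq_iff)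
  then show ?thesis by (simp add: symmetrizer_zero)
next
  case km: True
  let ?F = "\<lambda>w s. braid_coef p m s (permute_list s w) * f (permute_list s w)"
  have pair_cancel: "?F w s + ?F w (s \<circ> adj_transpose k) = 0"
    if w: "length w = m" and s: "s permutes {..<m}" "s k < s (Suc k)" for w s
  proof -
    define v where "v = permute_list s w"
    have lv: "length v = m" by (simp add: v_def w)
    have "?F w s + ?F w (s \<circ> adj_transpose k)
        = braid_coef p m s v * (f v + p (v ! Suc k) (v ! k) * f (swap_at k v))"
      using km w s(2) lv
      by (simp add: v_def permute_list_comp_adj_transpose braid_coef_comp_adj_transpose algebra_simps)
    also have "\<dots> = 0" using f km lv by (simp add: antisym_at_def)
    finally show ?thesis .
  qed
  show ?thesis
  proof
    fix w :: "nat list"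
    show "symmetrizer p m (hcomp m f) w = 0"
    proof (cases "length w = m")
      case True
      then have "symmetrizer p m (hcomp m f) w = (\<Sum>s | s permutes {..<m}. ?F w s)"
        by (simp add: symmetrizer_def hcomp_def permute_word_eq_permute_list)
      also have "\<dots> = 0"
        using km True by (simp add: sum_permutes_pair_adj_transpose pair_cancel)
      finally show ?thesis .
    qed (simp add: symmetrizer_def hcomp_def permute_word_eq_permute_list)
  qed
qed

lemma symmetrizer_antisym_span: "f \<in> antisym_span p \<Longrightarrow> symmetrizer p m (hcomp m f) = (\<lambda>_. 0)"
proof (induction f rule: antisym_span.induct)
  case antisym_span_zero then show ?case by (simp add: hcomp_zero symmetrizer_zero)
next
  case (antisym_span_add f g) then show ?case by (simp add: hcomp_add symmetrizer_add)
next
  case (antisym_span_smult f a) then show ?case by (simp add: hcomp_smult symmetrizer_smult)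
next
  case (antisym_span_antisym_at k f) then show ?case by (rule symmetrizer_antisym_at)
qed

lemma antisym_span_in_nichols_ideal:
  assumes "f \<in> antisym_span p" "tensor n f"
  shows "f \<in> nichols_ideal p n"
proof -
  have "hcomp m f = (\<lambda>_. 0)" if "m < 2" for m
    using that antisym_span_short[OF assms(1)] by (auto simp: hcomp_def)
  then show ?thesis
    using assms by (simp add: nichols_ideal_def symmetrizer_antisym_span)
qed

section \<open>Twisted products\<close>

definition swap_invariant :: "(nat list \<Rightarrow> nat list \<Rightarrow> 'a) \<Rightarrow> bool" where
  "swap_invariant c \<longleftrightarrow>
     (\<forall>k a b. Suc k < length a \<longrightarrow> c (swap_at k a) b = c a b) \<and>
     (\<forall>k a b. Suc k < length b \<longrightarrow> c a (swap_at k b) = c a b)"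

lemma swap_invariant_chi: "swap_invariant (chi p)"
  unfolding swap_invariant_def chi_def
proof (intro conjI allI impI)
  fix k :: nat and a b :: "nat list"
  show "Suc k < length a \<Longrightarrow> (\<Prod>i<length (swap_at k a). \<Prod>j<length b. p (swap_at k a ! i) (b ! j))
      = (\<Prod>i<length a. \<Prod>j<length b. p (a ! i) (b ! j))"
    using prod_nth_swap_at[of k a "\<lambda>x. \<Prod>j<length b. p x (b ! j)"] by simp
  show "Suc k < length b \<Longrightarrow> (\<Prod>i<length a. \<Prod>j<length (swap_at k b). p (a ! i) (swap_at k b ! j))
      = (\<Prod>i<length a. \<Prod>j<length b. p (a ! i) (b ! j))"
    by (simp add: prod_nth_swap_at)
qed

lemma swap_invariant_flip: "swap_invariant c \<Longrightarrow> swap_invariant (\<lambda>a b. c b a)"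
  by (simp add: swap_invariant_def)

lemma swap_invariant_const: "swap_invariant (\<lambda>_ _. e)"
  by (simp add: swap_invariant_def)

lemma chi_letters: "chi p [a] [b] = p a b"
  by (simp add: chi_def)

definition twisted_mult :: "(nat list \<Rightarrow> nat list \<Rightarrow> 'a::comm_ring_1)
    \<Rightarrow> (nat list \<Rightarrow> 'a) \<Rightarrow> (nat list \<Rightarrow> 'a) \<Rightarrow> nat list \<Rightarrow> 'a" where
  "twisted_mult c u v = (\<lambda>w. \<Sum>j\<le>length w. c (take j w) (drop j w) * u (take j w) * v (drop j w))"

lemma bbr_eq_twisted_mult:
  "bbr p u v = (\<lambda>w. twisted_mult (\<lambda>_ _. 1) u v w - twisted_mult (\<lambda>a b. chi p b a) v u w)"
  by (simp add: bbr_def twisted_mult_def fun_eq_iff sum_subtractf algebra_simps)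

lemma rbr_eq_twisted_mult:
  "rbr p u v = (\<lambda>w. twisted_mult (chi p) u v w - twisted_mult (chi p) v u w)"
  by (simp add: rbr_def twisted_mult_def fun_eq_iff sum_subtractf algebra_simps)

lemma twisted_mult_add_left:
  "twisted_mult c (\<lambda>w. f w + g w) v = (\<lambda>w. twisted_mult c f v w + twisted_mult c g v w)"
  by (simp add: twisted_mult_def algebra_simps sum.distrib)

lemma twisted_mult_smult_left: "twisted_mult c (\<lambda>w. a * f w) v = (\<lambda>w. a * twisted_mult c f v w)"
  by (simp add: twisted_mult_def algebra_simps sum_distrib_left)

lemma twisted_mult_zero_left: "twisted_mult c (\<lambda>_. 0) v = (\<lambda>_. 0)"
  by (simp add: twisted_mult_def)

lemma twisted_mult_sum_left:
  "twisted_mult c (\<lambda>w. \<Sum>j\<in>A. f j w) v = (\<lambda>w. \<Sum>j\<in>A. twisted_mult c (f j) v w)"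
  by (simp add: twisted_mult_def fun_eq_iff sum_distrib_left sum_distrib_right algebra_simps
      sum.swap[where A = A])

lemma twisted_mult_add_right:
  "twisted_mult c v (\<lambda>w. f w + g w) = (\<lambda>w. twisted_mult c v f w + twisted_mult c v g w)"
  by (simp add: twisted_mult_def algebra_simps sum.distrib)

lemma twisted_mult_smult_right: "twisted_mult c v (\<lambda>w. a * f w) = (\<lambda>w. a * twisted_mult c v f w)"
  by (simp add: twisted_mult_def algebra_simps sum_distrib_left)

lemma twisted_mult_zero_right: "twisted_mult c v (\<lambda>_. 0) = (\<lambda>_. 0)"
  by (simp add: twisted_mult_def)

lemma twisted_mult_diff:
  "twisted_mult c u v w - twisted_mult c u' v' w
     = twisted_mult c (\<lambda>x. u x - u' x) v w + twisted_mult c u' (\<lambda>x. v x - v' x) w"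
  by (simp add: twisted_mult_def sum.distrib[symmetric] sum_subtractf[symmetric] algebra_simps)

lemma twisted_mult_hcomp_left:
  "twisted_mult c (hcomp j v) u w
     = (if j \<le> length w then c (take j w) (drop j w) * v (take j w) * u (drop j w) else 0)"
proof -
  have "twisted_mult c (hcomp j v) u w
      = (\<Sum>i\<le>length w. if i = j then c (take i w) (drop i w) * v (take i w) * u (drop i w) else 0)"
    unfolding twisted_mult_def hcomp_def by (intro sum.cong) (auto simp: min_def)
  then show ?thesis by (simp add: sum.delta)
qed

lemma tensor_twisted_mult:
  assumes "tensor n u" "tensor n v"
  shows "tensor n (twisted_mult c u v)"
proof -
  let ?U = "{w. u w \<noteq> 0}" and ?V = "{w. v w \<noteq> 0}"
  have supp: "{w. twisted_mult c u v w \<noteq> 0} \<subseteq> (\<lambda>(a, b). a @ b) ` (?U \<times> ?V)"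
  proof
    fix w assume "w \<in> {w. twisted_mult c u v w \<noteq> 0}"
    then obtain j where "c (take j w) (drop j w) * u (take j w) * v (drop j w) \<noteq> 0"
      unfolding twisted_mult_def by (auto elim: sum.not_neutral_contains_not_neutral)
    then have "(take j w, drop j w) \<in> ?U \<times> ?V" by auto
    then show "w \<in> (\<lambda>(a, b). a @ b) ` (?U \<times> ?V)"
      by (intro image_eqI[of _ _ "(take j w, drop j w)"]) auto
  qed
  moreover have "finite ((\<lambda>(a, b). a @ b) ` (?U \<times> ?V))" using assms by (simp add: tensor_def)
  ultimately have "finite {w. twisted_mult c u v w \<noteq> 0}" by (rule finite_subset)
  moreover have "set w \<subseteq> {..<n}" if nz: "twisted_mult c u v w \<noteq> 0" for w
  proof -
    obtain a b where "u a \<noteq> 0" "v b \<noteq> 0" "w = a @ b" using subsetD[OF supp, of w] nz by auto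
    with assms have "set a \<subseteq> {..<n}" "set b \<subseteq> {..<n}" unfolding tensor_def by blast+
    with \<open>w = a @ b\<close> show ?thesis by simp
  qed
  ultimately show ?thesis by (simp add: tensor_def)
qed

lemma antisym_at_twisted_mult_left:
  assumes u: "antisym_at p k u" and c: "swap_invariant c"
  shows "antisym_at p k (twisted_mult c u v)"
  unfolding antisym_at_def
proof (intro conjI allI impI)
  fix w :: "nat list" assume "length w \<le> Suc k"
  then show "twisted_mult c u v w = 0"
    using u by (auto simp: twisted_mult_def antisym_at_def intro!: sum.neutral)
next
  fix w :: "nat list" assume w: "Suc k < length w"
  let ?q = "p (w ! Suc k) (w ! k)" and ?w = "swap_at k w"
  have "c (take j w) (drop j w) * u (take j w) * v (drop j w)
      + ?q * (c (take j ?w) (drop j ?w) * u (take j ?w) * v (drop j ?w)) = 0" for j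
  proof (cases "Suc k < j")
    case True
    have "c (swap_at k (take j w)) (drop j w) = c (take j w) (drop j w)"
      using c w True by (simp add: swap_invariant_def)
    then have "c (take j w) (drop j w) * u (take j w) * v (drop j w)
        + ?q * (c (take j ?w) (drop j ?w) * u (take j ?w) * v (drop j ?w))
        = c (take j w) (drop j w) * v (drop j w) * (u (take j w) + ?q * u (swap_at k (take j w)))"
      using True by (simp add: take_swap_at_high drop_swap_at_high algebra_simps)
    also have "\<dots> = 0"
      using antisym_atD[OF u, of "take j w"] w True by simp
    finally show ?thesis .
  qed (simp add: antisym_at_short[OF u])
  then show "twisted_mult c u v w + ?q * twisted_mult c u v ?w = 0"
    unfolding twisted_mult_def by (simp add: sum_distrib_left sum.distrib[symmetric])
qed

lemma antisym_at_twisted_mult_right: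
  assumes u: "antisym_at p k u" and c: "swap_invariant c"
  shows "antisym_at p (j + k) (twisted_mult c (hcomp j v) u)"
  unfolding antisym_at_def
proof (intro conjI allI impI)
  fix w :: "nat list" assume "length w \<le> Suc (j + k)"
  then show "twisted_mult c (hcomp j v) u w = 0"
    using u by (simp add: twisted_mult_hcomp_left antisym_at_def)
next
  fix w :: "nat list" assume w: "Suc (j + k) < length w"
  let ?d = "drop j w"
  let ?q = "p (w ! Suc (j + k)) (w ! (j + k))" and ?t = "twisted_mult c (hcomp j v) u"
  have "c (take j w) (swap_at k ?d) = c (take j w) ?d"
    using c w by (simp add: swap_invariant_def)
  then have "?t w + ?q * ?t (swap_at (j + k) w)
      = c (take j w) ?d * v (take j w) * (u ?d + ?q * u (swap_at k ?d))"
    using w by (simp add: twisted_mult_hcomp_left take_swap_at_low drop_swap_at_low algebra_simps)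
  also have "\<dots> = 0"
    using antisym_atD[OF u, of ?d] w by simp
  finally show "?t w + ?q * ?t (swap_at (j + k) w) = 0" .
qed

lemma antisym_span_twisted_mult_left:
  assumes "f \<in> antisym_span p" "swap_invariant c"
  shows "twisted_mult c f v \<in> antisym_span p"
  using assms(1)
proof (induction f rule: antisym_span.induct)
  case antisym_span_zero
  then show ?case by (simp add: twisted_mult_zero_left antisym_span.antisym_span_zero)
next
  case (antisym_span_add f g)
  then show ?case by (simp add: twisted_mult_add_left antisym_span.antisym_span_add)
next
  case (antisym_span_smult f a)
  then show ?case by (simp add: twisted_mult_smult_left antisym_span.antisym_span_smult)
next
  case (antisym_span_antisym_at k f)
  then show ?case
    by (intro antisym_span.antisym_span_antisym_at antisym_at_twisted_mult_left assms(2))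
qed

lemma antisym_span_twisted_mult_right:
  assumes "f \<in> antisym_span p" "swap_invariant c" "tensor n v"
  shows "twisted_mult c v f \<in> antisym_span p"
  using assms(1)
proof (induction f rule: antisym_span.induct)
  case antisym_span_zero
  then show ?case by (simp add: twisted_mult_zero_right antisym_span.antisym_span_zero)
next
  case (antisym_span_add f g)
  then show ?case by (simp add: twisted_mult_add_right antisym_span.antisym_span_add)
next
  case (antisym_span_smult f a)
  then show ?case by (simp add: twisted_mult_smult_right antisym_span.antisym_span_smult)
next
  case (antisym_span_antisym_at k f)
  obtain N where "\<And>w. v w \<noteq> 0 \<Longrightarrow> length w \<le> N"
    using tensor_support_bounded[OF assms(3)] by blast
  then have "twisted_mult c v f = (\<lambda>w. \<Sum>j\<le>N. twisted_mult c (hcomp j v) f w)"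
    by (metis sum_hcomp_eq twisted_mult_sum_left)
  also have "\<dots> \<in> antisym_span p"
    using antisym_span_antisym_at assms(2)
    by (intro antisym_span_sum)
      (auto intro: antisym_span.antisym_span_antisym_at antisym_at_twisted_mult_right)
  finally show ?case .
qed

lemma antisym_span_twisted_mult_diff:
  assumes c: "swap_invariant c" and u': "tensor n u'"
    and "(\<lambda>w. u w - u' w) \<in> antisym_span p" "(\<lambda>w. v w - v' w) \<in> antisym_span p"
  shows "(\<lambda>w. twisted_mult c u v w - twisted_mult c u' v' w) \<in> antisym_span p"
  unfolding twisted_mult_diff
  by (intro antisym_span_add antisym_span_twisted_mult_left[OF _ c]
      antisym_span_twisted_mult_right[OF _ c u'] assms)

lemma twisted_mult_length2:
  "u [] = 0 \<Longrightarrow> v [] = 0 \<Longrightarrow> twisted_mult c u v [a, b] = c [a] [b] * u [a] * v [b]"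
  by (simp add: twisted_mult_def numeral_2_eq_2)

lemma twisted_mult_vspace:
  assumes "u \<in> vspace n" "v \<in> vspace n" "length w \<noteq> 2"
  shows "twisted_mult c u v w = 0"
  unfolding twisted_mult_def
proof (intro sum.neutral ballI)
  fix j assume "j \<in> {..length w}"
  then have "length (take j w) \<noteq> 1 \<or> length (drop j w) \<noteq> 1" using assms(3) by auto
  then show "c (take j w) (drop j w) * u (take j w) * v (drop j w) = 0"
    using vspace_length[OF assms(1)] vspace_length[OF assms(2)]
    by (metis mult_zero_left mult_zero_right)
qed

lemma bbr_Nil: "bbr p u v [] = 0"
  by (simp add: bbr_def chi_def)

lemma rbr_Nil: "rbr p u v [] = 0"
  by (simp add: rbr_def chi_def)

lemma bbr_length2:
  "u [] = 0 \<Longrightarrow> v [] = 0 \<Longrightarrow> bbr p u v [a, b] = u [a] * v [b] - p b a * u [b] * v [a]"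
  by (simp add: bbr_eq_twisted_mult twisted_mult_length2 chi_letters)

lemma rbr_length2:
  "u [] = 0 \<Longrightarrow> v [] = 0 \<Longrightarrow> rbr p u v [a, b] = p a b * (u [a] * v [b] - u [b] * v [a])"
  by (simp add: rbr_eq_twisted_mult twisted_mult_length2 chi_letters algebra_simps)

section \<open>The generated subspaces collapse to V\<close>

lemma generated_sum:
  "finite A \<Longrightarrow> (\<And>i. i \<in> A \<Longrightarrow> f i \<in> generated br n) \<Longrightarrow> (\<lambda>w. \<Sum>i\<in>A. f i w) \<in> generated br n"
proof (induction A rule: finite_induct)
  case (insert i A)
  then have "(\<lambda>w. f i w + (\<Sum>i\<in>A. f i w)) \<in> generated br n" by (intro gen_add) auto
  with insert show ?case by simp
qed (simp add: gen_zero)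

lemma vspace_subset_generated:
  "vspace n \<subseteq> (generated br n :: (nat list \<Rightarrow> 'a::comm_ring_1) set)"
proof
  fix u :: "nat list \<Rightarrow> 'a" assume u: "u \<in> vspace n"
  have "(\<lambda>w. \<Sum>i<n. u [i] * gen_x i w) \<in> generated br n"
    by (intro generated_sum gen_smult gen_basis) auto
  then show "u \<in> generated br n" by (subst vspace_eq_sum_gen_x[OF u])
qed

lemma generated_congruent_hcomp_1:
  fixes br :: "(nat list \<Rightarrow> 'a::comm_ring_1) \<Rightarrow> (nat list \<Rightarrow> 'a) \<Rightarrow> nat list \<Rightarrow> 'a"
  assumes br: "\<And>u v. br u v = (\<lambda>w. twisted_mult c u v w - twisted_mult d v u w)"
    and cd: "swap_invariant c" "swap_invariant d"
    and vspace_br: "\<And>u v. u \<in> vspace n \<Longrightarrow> v \<in> vspace n \<Longrightarrow> antisym_at p 0 (br u v)"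
    and "u \<in> generated br n"
  shows "tensor n u \<and> (\<lambda>w. u w - hcomp 1 u w) \<in> antisym_span p"
  using \<open>u \<in> generated br n\<close>
proof (induction u rule: generated.induct)
  case (gen_basis i)
  have "(\<lambda>w. gen_x i w - hcomp 1 (gen_x i) w) = (\<lambda>_. 0 :: 'a)"
    by (auto simp: gen_x_def hcomp_def fun_eq_iff)
  then show ?case using gen_basis by (simp add: tensor_gen_x antisym_span_zero)
next
  case gen_zero
  then show ?case by (simp add: tensor_zero hcomp_def antisym_span_zero)
next
  case (gen_add u v)
  have "(\<lambda>w. u w + v w - hcomp 1 (\<lambda>w. u w + v w) w)
      = (\<lambda>w. (u w - hcomp 1 u w) + (v w - hcomp 1 v w))"
    by (simp add: hcomp_def fun_eq_iff)
  then show ?case using gen_add by (simp add: tensor_add antisym_span_add)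
next
  case (gen_smult u a)
  have "(\<lambda>w. a * u w - hcomp 1 (\<lambda>w. a * u w) w) = (\<lambda>w. a * (u w - hcomp 1 u w))"
    by (simp add: hcomp_def fun_eq_iff right_diff_distrib)
  then show ?case using gen_smult by (simp add: tensor_smult antisym_span_smult)
next
  case (gen_br u v)
  let ?u1 = "hcomp 1 u" and ?v1 = "hcomp 1 v"
  have t1: "tensor n ?u1" "tensor n ?v1" using gen_br by (simp_all add: tensor_hcomp)
  have "(\<lambda>w. twisted_mult c u v w - twisted_mult c ?u1 ?v1 w) \<in> antisym_span p"
    using gen_br by (intro antisym_span_twisted_mult_diff[OF cd(1) t1(1)]) simp_all
  moreover have "(\<lambda>w. twisted_mult d v u w - twisted_mult d ?v1 ?u1 w) \<in> antisym_span p"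
    using gen_br by (intro antisym_span_twisted_mult_diff[OF cd(2) t1(2)]) simp_all
  ultimately have "(\<lambda>w. (twisted_mult c u v w - twisted_mult c ?u1 ?v1 w)
      - (twisted_mult d v u w - twisted_mult d ?v1 ?u1 w)) \<in> antisym_span p"
    by (rule antisym_span_diff)
  then have "(\<lambda>w. br u v w - br ?u1 ?v1 w) \<in> antisym_span p"
    unfolding br by (simp add: algebra_simps)
  moreover have "br ?u1 ?v1 \<in> antisym_span p"
    using gen_br by (intro antisym_span_antisym_at[of p 0] vspace_br hcomp_1_in_vspace) simp_all
  ultimately have "(\<lambda>w. (br u v w - br ?u1 ?v1 w) + br ?u1 ?v1 w) \<in> antisym_span p"
    by (rule antisym_span_add)
  then have span: "br u v \<in> antisym_span p" by simp
  then have "hcomp 1 (br u v) = (\<lambda>_. 0)"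
    by (auto simp: hcomp_def fun_eq_iff antisym_span_short)
  moreover have "tensor n (br u v)"
    using gen_br unfolding br by (intro tensor_diff tensor_twisted_mult) simp_all
  ultimately show ?case using span by simp
qed

lemma nichols_image_generated_eq_V:
  assumes "\<And>u. u \<in> generated br n \<Longrightarrow> tensor n u \<and> (\<lambda>w. u w - hcomp 1 u w) \<in> antisym_span p"
  shows "nichols_image p n (generated br n) = nichols_V p n"
proof (intro equalityI subsetI)
  fix v assume "v \<in> nichols_image p n (generated br n)"
  then obtain u where u: "u \<in> generated br n" "(\<lambda>w. u w - v w) \<in> nichols_ideal p n"
    by (auto simp: nichols_image_def)
  have "(\<lambda>w. u w - hcomp 1 u w) \<in> nichols_ideal p n"
    using assms[OF u(1)] by (intro antisym_span_in_nichols_ideal tensor_diff tensor_hcomp) simp_all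
  from nichols_ideal_diff[OF u(2) this]
  have "(\<lambda>w. hcomp 1 u w - v w) \<in> nichols_ideal p n" by simp
  moreover have "hcomp 1 u \<in> vspace n" using assms[OF u(1)] hcomp_1_in_vspace by blast
  ultimately show "v \<in> nichols_V p n" by (auto simp: nichols_V_def nichols_image_def)
next
  fix v assume "v \<in> nichols_V p n"
  then show "v \<in> nichols_image p n (generated br n)"
    using vspace_subset_generated by (auto simp: nichols_V_def nichols_image_def)
qed

lemma antisym_at_0I:
  assumes "\<And>w. length w \<noteq> 2 \<Longrightarrow> f w = 0" and "\<And>a b. f [a, b] + p b a * f [b, a] = 0"
  shows "antisym_at p 0 f"
  unfolding antisym_at_def
proof (intro conjI allI impI)
  fix w :: "nat list"
  show "f w + p (w ! Suc 0) (w ! 0) * f (swap_at 0 w) = 0"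
  proof (cases "length w = 2")
    case True
    then obtain a b where "w = [a, b]" by (auto simp: numeral_2_eq_2 length_Suc_conv)
    then show ?thesis using assms(2) by (simp add: swap_at_def)
  qed (simp add: assms(1))
qed (simp add: assms(1))

lemma antisym_at_bbr_vspace:
  assumes p: "\<forall>i<n. \<forall>j<n. p i j * p j i = 1" and uv: "u \<in> vspace n" "v \<in> vspace n"
  shows "antisym_at p 0 (bbr p u v)"
proof (rule antisym_at_0I)
  show "bbr p u v w = 0" if "length w \<noteq> 2" for w
    using uv that by (simp add: bbr_eq_twisted_mult twisted_mult_vspace)
  fix a b
  have "bbr p u v [a, b] + p b a * bbr p u v [b, a] = u [a] * v [b] * (1 - p a b * p b a)"
    using uv by (simp add: bbr_length2 vspace_Nil algebra_simps)
  also have "\<dots> = 0"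
    using p uv by (cases "a < n \<and> b < n") (auto simp: vspace_letter)
  finally show "bbr p u v [a, b] + p b a * bbr p u v [b, a] = 0" .
qed

lemma antisym_at_rbr_vspace:
  assumes p: "\<forall>i<n. \<forall>j<n. i \<noteq> j \<longrightarrow> p i j * p j i = 1 \<and> (p i j)^3 = 1"
    and uv: "u \<in> vspace n" "v \<in> vspace n"
  shows "antisym_at p 0 (rbr p u v)"
proof (rule antisym_at_0I)
  show "rbr p u v w = 0" if "length w \<noteq> 2" for w
    using uv that by (simp add: rbr_eq_twisted_mult twisted_mult_vspace)
  fix a b
  have "rbr p u v [a, b] + p b a * rbr p u v [b, a]
      = (u [a] * v [b] - u [b] * v [a]) * (p a b - p b a * p b a)"
    using uv by (simp add: rbr_length2 vspace_Nil algebra_simps)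
  also have "\<dots> = 0"
  proof (cases "a < n \<and> b < n \<and> a \<noteq> b")
    case True
    then have "p a b * p b a = 1" "(p b a)^3 = 1" using p by auto
    then have "p a b = p a b * (p b a)^3" by simp
    also have "\<dots> = (p a b * p b a) * (p b a * p b a)" by (simp add: power3_eq_cube mult.assoc)
    finally show ?thesis using \<open>p a b * p b a = 1\<close> by simp
  qed (use uv in \<open>auto simp: vspace_letter\<close>)
  finally show "rbr p u v [a, b] + p b a * rbr p u v [b, a] = 0" .
qed

lemma nichols_L_eq_V:
  assumes "\<forall>i<n. \<forall>j<n. p i j * p j i = 1"
  shows "nichols_L p n = nichols_V p n"
  unfolding nichols_L_def
proof (rule nichols_image_generated_eq_V)
  fix u assume "u \<in> generated (bbr p) n"
  moreover have "antisym_at p 0 (bbr p v v')" if "v \<in> vspace n" "v' \<in> vspace n" for v v'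
    using assms that by (rule antisym_at_bbr_vspace)
  ultimately show "tensor n u \<and> (\<lambda>w. u w - hcomp 1 u w) \<in> antisym_span p"
    by (intro generated_congruent_hcomp_1[where br = "bbr p", OF bbr_eq_twisted_mult swap_invariant_const
        swap_invariant_flip[OF swap_invariant_chi]])
qed

lemma nichols_LR_eq_V:
  assumes "\<forall>i<n. \<forall>j<n. i \<noteq> j \<longrightarrow> p i j * p j i = 1 \<and> (p i j)^3 = 1"
  shows "nichols_LR p n = nichols_V p n"
  unfolding nichols_LR_def
proof (rule nichols_image_generated_eq_V)
  fix u assume "u \<in> generated (rbr p) n"
  moreover have "antisym_at p 0 (rbr p v v')" if "v \<in> vspace n" "v' \<in> vspace n" for v v'
    using assms that by (rule antisym_at_rbr_vspace)
  ultimately show "tensor n u \<and> (\<lambda>w. u w - hcomp 1 u w) \<in> antisym_span p"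
    by (intro generated_congruent_hcomp_1[where br = "rbr p", OF rbr_eq_twisted_mult swap_invariant_chi
        swap_invariant_chi])
qed

section \<open>Degree two\<close>

lemma permutes_lessThan_2: "{s. s permutes {..<2::nat}} = {id, adj_transpose 0}"
proof -
  have "{..<2::nat} = {0, Suc 0}" by auto
  then show ?thesis using permutes_doubleton_iff[of _ "0::nat" "Suc 0"] by auto
qed

lemma symmetrizer_length2: "symmetrizer p 2 (hcomp 2 d) [a, b] = d [a, b] + p b a * d [b, a]"
proof -
  have "id \<noteq> adj_transpose 0" by (auto simp: fun_eq_iff transpose_def)
  moreover have "braid_coef p 2 id v = 1" for v
    unfolding braid_coef_def by (rule prod.neutral) auto
  moreover have "{(x, y). x < y \<and> y < (2::nat) \<and> adj_transpose 0 y < adj_transpose 0 x} = {(0, 1)}"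
    by (auto simp: transpose_def)
  then have "braid_coef p 2 (adj_transpose 0) v = p (v ! 0) (v ! 1)" for v
    by (simp add: braid_coef_def)
  moreover have "permute_word id [a, b] = [a, b]" "permute_word (adj_transpose 0) [a, b] = [b, a]"
    by (simp_all add: permute_word_def upt_rec)
  ultimately show ?thesis by (simp add: symmetrizer_def permutes_lessThan_2 hcomp_def)
qed

lemma nichols_ideal_length2: "d \<in> nichols_ideal p n \<Longrightarrow> d [a, b] + p b a * d [b, a] = 0"
  using symmetrizer_length2[of p d a b] by (simp add: nichols_ideal_def)

lemma nichols_image_subset_length2E:
  assumes "nichols_image p n S \<subseteq> nichols_image p n T" "z \<in> S"
  obtains u where "u \<in> T" "\<And>a b. u [a, b] + p b a * u [b, a] = z [a, b] + p b a * z [b, a]"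
proof -
  have "z \<in> nichols_image p n S"
    using assms(2) nichols_ideal_zero[of p n] by (force simp: nichols_image_def)
  then obtain u where u: "u \<in> T" "(\<lambda>w. u w - z w) \<in> nichols_ideal p n"
    using assms(1) by (auto simp: nichols_image_def)
  have "u [a, b] + p b a * u [b, a] = z [a, b] + p b a * z [b, a]" for a b
    using nichols_ideal_length2[OF u(2), of a b] by (simp add: algebra_simps)
  with u(1) show ?thesis by (rule that)
qed

lemma generated_linear_invariant:
  fixes \<phi> :: "(nat list \<Rightarrow> 'a::comm_ring_1) \<Rightarrow> 'a"
  assumes "u \<in> generated br n"
    and basis: "\<And>i. i < n \<Longrightarrow> \<phi> (gen_x i) = 0"
    and add: "\<And>u v. \<phi> (\<lambda>w. u w + v w) = \<phi> u + \<phi> v"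
    and smult: "\<And>c u. \<phi> (\<lambda>w. c * u w) = c * \<phi> u"
    and bracket: "\<And>u v. u \<in> generated br n \<Longrightarrow> v \<in> generated br n \<Longrightarrow> \<phi> (br u v) = 0"
  shows "\<phi> u = 0"
  using assms(1)
proof (induction u rule: generated.induct)
  case gen_zero
  show ?case using smult[of 0 "\<lambda>_. 0"] by simp
qed (simp_all add: basis add smult bracket)

lemma generated_Nil: "(\<And>u v. br u v [] = 0) \<Longrightarrow> u \<in> generated br n \<Longrightarrow> u [] = 0"
  by (erule generated_linear_invariant[where \<phi> = "\<lambda>u. u []"]) (simp_all add: gen_x_def)

lemma generated_rbr_length2:
  assumes "u \<in> generated (rbr p) n"
  shows "p b a * u [a, b] + p a b * u [b, a] = 0"
proof (rule generated_linear_invariant[where \<phi> = "\<lambda>u. p b a * u [a, b] + p a b * u [b, a]", OF assms])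
  fix u v assume "u \<in> generated (rbr p) n" "v \<in> generated (rbr p) n"
  then have "u [] = 0" "v [] = 0" using generated_Nil[where br = "rbr p", OF rbr_Nil] by blast+
  then show "p b a * rbr p u v [a, b] + p a b * rbr p u v [b, a] = 0"
    by (simp add: rbr_length2 algebra_simps)
qed (auto simp: gen_x_def algebra_simps)

lemma generated_bbr_length2:
  assumes "p a b * p b a = 1" "u \<in> generated (bbr p) n"
  shows "u [b, a] + p a b * u [a, b] = 0"
proof (rule generated_linear_invariant[where \<phi> = "\<lambda>u. u [b, a] + p a b * u [a, b]", OF assms(2)])
  fix u v assume "u \<in> generated (bbr p) n" "v \<in> generated (bbr p) n"
  then have "u [] = 0" "v [] = 0" using generated_Nil[where br = "bbr p", OF bbr_Nil] by blast+
  then have "bbr p u v [b, a] + p a b * bbr p u v [a, b] = u [b] * v [a] * (1 - p a b * p b a)"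
    by (simp add: bbr_length2 algebra_simps)
  then show "bbr p u v [b, a] + p a b * bbr p u v [a, b] = 0" using assms(1) by simp
qed (auto simp: gen_x_def algebra_simps)

lemma nichols_L_subset_LR_diagonal:
  fixes p :: "nat \<Rightarrow> nat \<Rightarrow> 'a::idom"
  assumes L: "nichols_L p n \<subseteq> nichols_LR p n" and i: "i < n"
    and "p i i \<noteq> 0" "(2::'a) \<noteq> 0"
  shows "(p i i)^2 = 1"
proof -
  let ?z = "bbr p (gen_x i) (gen_x i)"
  have "?z \<in> generated (bbr p) n" using i by (intro gen_br gen_basis)
  then obtain u where u: "u \<in> generated (rbr p) n"
    and e: "u [i, i] + p i i * u [i, i] = ?z [i, i] + p i i * ?z [i, i]"
    using nichols_image_subset_length2E[OF L[unfolded nichols_L_def nichols_LR_def]] by blast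
  have u0: "u [i, i] = 0"
    using generated_rbr_length2[OF u, of i i] assms(3,4) by (simp flip: mult_2)
  have z: "?z [i, i] = 1 - p i i" by (simp add: bbr_length2 gen_x_Nil gen_x_letter)
  have "(1 - p i i) + p i i * (1 - p i i) = 0" using e unfolding u0 z by simp
  then show ?thesis by (simp add: power2_eq_square algebra_simps)
qed

lemma nichols_L_subset_LR_square:
  fixes p :: "nat \<Rightarrow> nat \<Rightarrow> 'a::idom"
  assumes L: "nichols_L p n \<subseteq> nichols_LR p n" and ij: "i < n" "j < n" "i \<noteq> j"
    and q: "p i j * p j i \<noteq> 1"
  shows "p j i = (p i j)^2"
proof -
  let ?z = "bbr p (gen_x i) (gen_x j)"
  have "?z \<in> generated (bbr p) n" using ij by (intro gen_br gen_basis)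
  then obtain u where u: "u \<in> generated (rbr p) n"
    and e: "\<And>a b. u [a, b] + p b a * u [b, a] = ?z [a, b] + p b a * ?z [b, a]"
    using nichols_image_subset_length2E[OF L[unfolded nichols_L_def nichols_LR_def]] by blast
  have z: "?z [i, j] = 1" "?z [j, i] = - p i j"
    using ij by (simp_all add: bbr_length2 gen_x_Nil gen_x_letter)
  have "u [j, i] = - p i j * u [i, j]"
    using e[of j i] z by (simp add: algebra_simps eq_neg_iff_add_eq_0)
  with e[of i j] z have "(u [i, j] - 1) * (1 - p i j * p j i) = 0"
    by (simp add: algebra_simps)
  with q have "u [i, j] = 1" by simp
  with \<open>u [j, i] = - p i j * u [i, j]\<close> generated_rbr_length2[OF u, of i j]
  show ?thesis by (simp add: power2_eq_square)
qed

lemma nichols_L_subset_LR_symmetric: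
  fixes p :: "nat \<Rightarrow> nat \<Rightarrow> 'a::idom"
  assumes L: "nichols_L p n \<subseteq> nichols_LR p n" and ij: "i < n" "j < n" "i \<noteq> j"
    and "p i j \<noteq> 0"
  shows "p i j * p j i = 1"
proof (rule ccontr)
  assume q: "p i j * p j i \<noteq> 1"
  have ji: "p j i = (p i j)^2" using nichols_L_subset_LR_square[OF L ij q] .
  have "p i j = (p j i)^2" using nichols_L_subset_LR_square[OF L ij(2,1) ij(3)[symmetric]] q
    by (simp add: mult.commute)
  then have "p i j * 1 = p i j * (p i j)^3"
    by (simp add: ji power2_eq_square power3_eq_cube mult.assoc)
  then have "(p i j)^3 = 1" using \<open>p i j \<noteq> 0\<close> by (metis mult_left_cancel)
  with q ji show False by (simp add: power2_eq_square power3_eq_cube mult.assoc)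
qed

lemma nichols_LR_subset_L_cube:
  fixes p :: "nat \<Rightarrow> nat \<Rightarrow> 'a::idom"
  assumes LR: "nichols_LR p n \<subseteq> nichols_L p n" and ij: "i < n" "j < n" "i \<noteq> j"
    and q: "p i j * p j i = 1"
  shows "(p i j)^3 = 1"
proof -
  let ?z = "rbr p (gen_x i) (gen_x j)"
  have "?z \<in> generated (rbr p) n" using ij by (intro gen_br gen_basis)
  then obtain u where u: "u \<in> generated (bbr p) n"
    and "u [j, i] + p i j * u [i, j] = ?z [j, i] + p i j * ?z [i, j]"
    using nichols_image_subset_length2E[OF LR[unfolded nichols_L_def nichols_LR_def]] by blast
  moreover have "u [j, i] + p i j * u [i, j] = 0" using generated_bbr_length2[OF q u] .
  moreover have "?z [i, j] = p i j" "?z [j, i] = - p j i"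
    using ij by (simp_all add: rbr_length2 gen_x_Nil gen_x_letter)
  ultimately have "p i j * p i j = p j i" by simp
  then have "(p i j)^3 = p i j * p j i" by (simp add: power3_eq_cube)
  with q show ?thesis by simp
qed

theorem proposition5p1:
  fixes p :: "nat \<Rightarrow> nat \<Rightarrow> 'a::field_char_0" and n :: nat
  assumes "\<forall>i<n. \<forall>j<n. p i j \<noteq> 0"
  shows "(nichols_L p n = nichols_LR p n \<longleftrightarrow>
          (\<forall>i<n. (p i i)^2 = 1) \<and>
          (\<forall>i<n. \<forall>j<n. i \<noteq> j \<longrightarrow> p i j * p j i = 1 \<and> (p i j)^3 = 1))
       \<and> (nichols_L p n = nichols_LR p n \<longrightarrow>
          nichols_L p n = nichols_V p n \<and> nichols_LR p n = nichols_V p n)"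
proof -
  let ?conditions = "(\<forall>i<n. (p i i)^2 = 1) \<and>
    (\<forall>i<n. \<forall>j<n. i \<noteq> j \<longrightarrow> p i j * p j i = 1 \<and> (p i j)^3 = 1)"
  have equal_V: "nichols_L p n = nichols_V p n \<and> nichols_LR p n = nichols_V p n"
    if conditions: ?conditions
  proof
    have "\<forall>i<n. \<forall>j<n. p i j * p j i = 1" using conditions by (metis power2_eq_square)
    then show "nichols_L p n = nichols_V p n" by (rule nichols_L_eq_V)
    show "nichols_LR p n = nichols_V p n" using conditions by (intro nichols_LR_eq_V) blast
  qed
  have ?conditions if "nichols_L p n = nichols_LR p n"
    using that assms nichols_L_subset_LR_diagonal[of p n] nichols_L_subset_LR_symmetric[of p n]
      nichols_LR_subset_L_cube[of p n]
    by auto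
  with equal_V show ?thesis by metis
qed

end
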